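(* For any parameters $(V,W)$ of the one-layer transformer (no CoT, $k=0$), $\mathcal L^{\mathrm{Eval}}(V,W)\ge\Theta\!\left(\frac{d^2}{n}\right)$. Moreover, if $n=\tilde\Theta(d)$, then $\mathcal L^{\mathrm{Eval}}(V,W)=\tilde\Theta(d)\to+\infty$ as $d\to+\infty$.
   Context: Let $d,n\ge1$ and $d_e=2d+2$. Sample $\mathbf w^*\sim\mathcal N(0,I_d)$ and, independently, $\mathbf x_1,\dots,\mathbf x_n$ i.i.d. $\mathcal N(0,I_d)$. Set $y_i=\mathbf w^{*\top}\mathbf x_i$, $X=[\mathbf x_1,\dots,\mathbf x_n]$ and $\mathbf y=(y_1,\dots,y_n)$. For $V,W\in\mathbb R^{d_e\times d_e}$, define $f_{\mathrm{LSA}}(Z;V,W)=Z+VZ\,\frac{Z^\top WZ}{n}$. The input is $$Z_0=\begin{bmatrix}X&0_d\\ \mathbf y&0\\ 0_{d\times n}&0_d\\ 0_{1\times n}&1\end{bmatrix}\in\mathbb R^{d_e\times (n+1)}.$$ The evaluation loss without chain of thought is $$\mathcal L^{\mathrm{Eval}}(V,W)=\tfrac12\,\mathbb E\Big[\big\|f_{\mathrm{LSA}}(Z_0;V,W)_{[:,-1]}-(0_d,0,\mathbf w^*,1)\big\|^2\Big].$$ $\Theta,\tilde\Theta$ are asymptotic notations in $d,n$; $\tilde\Theta$ hides logarithmic factors. *)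

theory Defs
  imports "HOL-Probability.Probability"
begin

definition std_gauss :: "real measure" where
  "std_gauss = density lborel std_normal_density"

text \<open>Index set of all i.i.d. standard Gaussian coordinates:
  Inl j  ~ coordinate j of w* (j < d);  Inr (i,j) ~ coordinate j of x_i (i < n, j < d).\<close>
definition gauss_idx :: "nat \<Rightarrow> nat \<Rightarrow> (nat + nat \<times> nat) set" where
  "gauss_idx d n = Inl ` {..<d} \<union> Inr ` ({..<n} \<times> {..<d})"

definition data_measure :: "nat \<Rightarrow> nat \<Rightarrow> ((nat + nat \<times> nat) \<Rightarrow> real) measure" where
  "data_measure d n = PiM (gauss_idx d n) (\<lambda>_. std_gauss)"

definition emb_dim :: "nat \<Rightarrow> nat" where
  "emb_dim d = 2 * d + 2"

text \<open>The input Z_0, a d_e x (n+1) matrix; rows 0..d_e-1, columns 0..n (column n is the last one).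
  Rows 0..d-1: X; row d: y; rows d+1..2d: zero; row 2d+1: (0,...,0,1).\<close>
definition Z0 :: "nat \<Rightarrow> nat \<Rightarrow> ((nat + nat \<times> nat) \<Rightarrow> real) \<Rightarrow> nat \<Rightarrow> nat \<Rightarrow> real" where
  "Z0 d n \<omega> r c =
     (if c < n then
        (if r < d then \<omega> (Inr (c, r))
         else if r = d then (\<Sum>j<d. \<omega> (Inl j) * \<omega> (Inr (c, j)))
         else 0)
      else if c = n \<and> r = 2 * d + 1 then 1 else 0)"

text \<open>Last column of f_LSA(Z;V,W) = Z + V Z (Z^T W Z)/n, matrices V W of size d_e x d_e.\<close>
definition lsa_last :: "nat \<Rightarrow> nat \<Rightarrow> (nat \<Rightarrow> nat \<Rightarrow> real) \<Rightarrow> (nat \<Rightarrow> nat \<Rightarrow> real)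
    \<Rightarrow> (nat \<Rightarrow> nat \<Rightarrow> real) \<Rightarrow> nat \<Rightarrow> real" where
  "lsa_last d n V W Z r =
     Z r n + (\<Sum>a<emb_dim d. V r a *
        (\<Sum>c\<le>n. Z a c * (\<Sum>p<emb_dim d. \<Sum>q<emb_dim d. Z p c * W p q * Z q n))) / real n"

definition target_last :: "nat \<Rightarrow> ((nat + nat \<times> nat) \<Rightarrow> real) \<Rightarrow> nat \<Rightarrow> real" where
  "target_last d \<omega> r =
     (if d < r \<and> r \<le> 2 * d then \<omega> (Inl (r - d - 1)) else if r = 2 * d + 1 then 1 else 0)"

definition eval_loss :: "nat \<Rightarrow> nat \<Rightarrow> (nat \<Rightarrow> nat \<Rightarrow> real) \<Rightarrow> (nat \<Rightarrow> nat \<Rightarrow> real) \<Rightarrow> real" where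
  "eval_loss d n V W =
     (1/2) * (\<integral>\<omega>. (\<Sum>r<emb_dim d. (lsa_last d n V W (Z0 d n \<omega>) r - target_last d \<omega> r)\<^sup>2)
               \<partial>data_measure d n)"

definition opt_eval_loss :: "nat \<Rightarrow> nat \<Rightarrow> real" where
  "opt_eval_loss d n = (INF VW. eval_loss d n (fst VW) (snd VW))"

end

theory Submission
  imports Defs "HOL-Real_Asymp.Real_Asymp"
begin

(* Fix the output row that should reproduce w*_j and call its prediction P.  It is quadratic in
  the data columns (x_i, y_i) of Z_0, and y is the only entry odd in w*, so the part of P that is
  odd under w* \<mapsto> -w* is a statistic \<gamma>^T X y^T / n.  The residual
  T = w*_j - \<rho> e_j^T X y^T / n with \<rho> = n / (n + d + 1) is odd and, by a Gaussian moment
  computation, orthogonal to every such statistic; hence E[T P] = 0, while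
  E[T w*_j] = E[T^2] = (d + 1) / (n + d + 1).  Expanding 0 \<le> E[(P - w*_j + T)^2] gives
  E[(P - w*_j)^2] \<ge> (d + 1) / (n + d + 1), and summing over j the loss is at least
  d (d + 1) / (2 (n + d + 1)).  This is \<ge> d^2 / (6 n) for d \<le> n, and of order d up to
  logarithms when n = O(d polylog d); conversely V = W = 0 already achieves the loss d / 2. *)

section \<open>Standard Gaussian vectors\<close>

lemma prob_space_std_gauss: "prob_space std_gauss"
  unfolding std_gauss_def by (rule prob_space_normal_density) simp

lemma sets_std_gauss [simp, measurable_cong]: "sets std_gauss = sets borel"
  unfolding std_gauss_def by simp

lemma space_std_gauss [simp]: "space std_gauss = UNIV"
  unfolding std_gauss_def by simp

lemma integrable_std_gauss_power: "integrable std_gauss (\<lambda>x. x ^ k)"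
  unfolding std_gauss_def
  by (subst integrable_density) (auto simp: integrable_std_normal_moment)

lemma integrable_std_gauss_abs_power: "integrable std_gauss (\<lambda>x. \<bar>x\<bar> ^ k)"
  unfolding std_gauss_def
  by (subst integrable_density) (auto simp: integrable_std_normal_moment_abs)

definition gauss_moment :: "nat \<Rightarrow> real" where
  "gauss_moment k = (\<integral>x. x ^ k \<partial>std_gauss)"

lemma gauss_moment_eq_lborel: "gauss_moment k = (\<integral>x. std_normal_density x * x ^ k \<partial>lborel)"
  unfolding gauss_moment_def std_gauss_def by (subst integral_density) auto

lemma gauss_moment_even: "gauss_moment (2 * k) = fact (2 * k) / (2 ^ k * fact k)"
  unfolding gauss_moment_eq_lborel by (rule integral_std_normal_moment_even)

lemma gauss_moment_odd: "gauss_moment (2 * k + 1) = 0"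
  unfolding gauss_moment_eq_lborel by (rule integral_std_normal_moment_odd)

lemma gauss_moment_0_to_4 [simp]:
  "gauss_moment 0 = 1" "gauss_moment (Suc 0) = 0" "gauss_moment (Suc (Suc 0)) = 1"
  "gauss_moment (Suc (Suc (Suc 0))) = 0" "gauss_moment (Suc (Suc (Suc (Suc 0)))) = 3"
  using gauss_moment_even[of 0] gauss_moment_odd[of 0] gauss_moment_even[of 1]
    gauss_moment_odd[of 1] gauss_moment_even[of 2]
  by (simp_all add: fact_numeral numeral_eq_Suc)

lemma distr_std_gauss_uminus: "distr std_gauss std_gauss uminus = std_gauss"
proof (rule measure_eqI)
  fix A assume "A \<in> sets (distr std_gauss std_gauss uminus)"
  then have [measurable]: "A \<in> sets borel" by simp
  have [measurable]: "uminus -` A \<in> sets borel"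
    using measurable_sets_borel[of "uminus :: real \<Rightarrow> real" borel A] by simp
  have "emeasure (distr std_gauss std_gauss uminus) A = emeasure std_gauss (uminus -` A)"
    by (subst emeasure_distr) auto
  also have "\<dots> = (\<integral>\<^sup>+x. ennreal (std_normal_density x) * indicator (uminus -` A) x \<partial>lborel)"
    unfolding std_gauss_def by (subst emeasure_density) auto
  also have "\<dots> = (\<integral>\<^sup>+x. ennreal (std_normal_density (0 + (-1) * x)) * indicator A (0 + (-1) * x) \<partial>lborel)"
    by (intro nn_integral_cong) (auto simp: std_normal_density_def indicator_def)
  also have "\<dots> = (\<integral>\<^sup>+x. ennreal (std_normal_density x) * indicator A x \<partial>lborel)"
    using nn_integral_real_affine[of "\<lambda>x. ennreal (std_normal_density x) * indicator A x" "-1" 0]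
    by simp
  also have "\<dots> = emeasure std_gauss A"
    unfolding std_gauss_def by (subst emeasure_density) auto
  finally show "emeasure (distr std_gauss std_gauss uminus) A = emeasure std_gauss A" .
qed simp

lemma distr_PiM_coordinatewise:
  fixes f :: "'i \<Rightarrow> 'a \<Rightarrow> 'a"
  assumes "product_sigma_finite M" and "finite I"
    and f_meas: "\<And>i. i \<in> I \<Longrightarrow> f i \<in> measurable (M i) (M i)"
    and f_preserving: "\<And>i. i \<in> I \<Longrightarrow> distr (M i) (M i) (f i) = M i"
  shows "distr (PiM I M) (PiM I M) (\<lambda>\<omega>. restrict (\<lambda>i. f i (\<omega> i)) I) = PiM I M"
proof -
  interpret product_sigma_finite M by fact
  let ?F = "\<lambda>\<omega>. restrict (\<lambda>i. f i (\<omega> i)) I"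
  have F_meas: "?F \<in> measurable (PiM I M) (PiM I M)"
    by (rule measurable_restrict)
      (use f_meas in \<open>auto intro: measurable_compose[OF measurable_component_singleton]\<close>)
  show ?thesis
  proof (rule PiM_eqI[OF \<open>finite I\<close>])
    fix A assume A: "\<And>i. i \<in> I \<Longrightarrow> A i \<in> sets (M i)"
    have "emeasure (distr (PiM I M) (PiM I M) ?F) (Pi\<^sub>E I A)
        = emeasure (PiM I M) (?F -` Pi\<^sub>E I A \<inter> space (PiM I M))"
      using A \<open>finite I\<close> by (intro emeasure_distr F_meas sets_PiM_I_finite) auto
    also have "?F -` Pi\<^sub>E I A \<inter> space (PiM I M) = Pi\<^sub>E I (\<lambda>i. f i -` A i \<inter> space (M i))"
      by (auto simp: space_PiM PiE_def Pi_def extensional_def)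
    also have "emeasure (PiM I M) \<dots> = (\<Prod>i\<in>I. emeasure (M i) (f i -` A i \<inter> space (M i)))"
      using A f_meas \<open>finite I\<close> by (intro emeasure_PiM) auto
    also have "\<dots> = (\<Prod>i\<in>I. emeasure (M i) (A i))"
    proof (rule prod.cong[OF refl])
      fix i assume "i \<in> I"
      then show "emeasure (M i) (f i -` A i \<inter> space (M i)) = emeasure (M i) (A i)"
        using emeasure_distr[OF f_meas A] f_preserving by metis
    qed
    finally show "emeasure (distr (PiM I M) (PiM I M) ?F) (Pi\<^sub>E I A) = (\<Prod>i\<in>I. emeasure (M i) (A i))" .
  qed simp
qed

abbreviation gauss_PiM :: "'i set \<Rightarrow> ('i \<Rightarrow> real) measure" where
  "gauss_PiM I \<equiv> PiM I (\<lambda>_. std_gauss)"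

lemma product_sigma_finite_std_gauss: "product_sigma_finite (\<lambda>_. std_gauss)"
  unfolding product_sigma_finite_def
  using prob_space.finite_measure[OF prob_space_std_gauss] finite_measure.sigma_finite_measure by blast

lemma prob_space_gauss_PiM: "prob_space (gauss_PiM I)"
  by (intro prob_space_PiM prob_space_std_gauss)

lemma finite_measure_gauss_PiM: "finite_measure (gauss_PiM I)"
  using prob_space.finite_measure[OF prob_space_gauss_PiM] .

lemma integral_gauss_PiM_sign_flip:
  fixes I :: "'i set" and s :: "'i \<Rightarrow> bool" and g :: "('i \<Rightarrow> real) \<Rightarrow> real"
  assumes "finite I" and g_meas: "g \<in> borel_measurable (gauss_PiM I)"
  shows "(\<integral>\<omega>. g \<omega> \<partial>gauss_PiM I)
       = (\<integral>\<omega>. g (restrict (\<lambda>i. if s i then - \<omega> i else \<omega> i) I) \<partial>gauss_PiM I)"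
proof -
  let ?f = "\<lambda>i x. if s i then - x else x :: real"
  let ?F = "\<lambda>\<omega>. restrict (\<lambda>i. ?f i (\<omega> i)) I"
  have F_meas: "?F \<in> measurable (gauss_PiM I) (gauss_PiM I)"
    by (rule measurable_restrict) auto
  have "distr std_gauss std_gauss (?f i) = std_gauss" for i
    by (cases "s i") (simp_all add: distr_std_gauss_uminus)
  then have "distr (gauss_PiM I) (gauss_PiM I) ?F = gauss_PiM I"
    by (intro distr_PiM_coordinatewise product_sigma_finite_std_gauss \<open>finite I\<close>) auto
  then have "(\<integral>\<omega>. g \<omega> \<partial>gauss_PiM I) = (\<integral>\<omega>. g \<omega> \<partial>distr (gauss_PiM I) (gauss_PiM I) ?F)"
    by simp
  also have "\<dots> = (\<integral>\<omega>. g (?F \<omega>) \<partial>gauss_PiM I)"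
    using F_meas g_meas by (rule integral_distr)
  finally show ?thesis .
qed

lemma prod_list_map_eq_prod_count_list:
  assumes "set L \<subseteq> I" "finite I"
  shows "prod_list (map f L) = (\<Prod>i\<in>I. f i ^ count_list L i)"
  using assms(1)
proof (induction L)
  case (Cons a L)
  have "(\<Prod>i\<in>I. f i ^ count_list (a # L) i)
      = (\<Prod>i\<in>I. (if i = a then f i else 1)) * (\<Prod>i\<in>I. f i ^ count_list L i)"
    unfolding prod.distrib[symmetric] by (rule prod.cong) auto
  also have "(\<Prod>i\<in>I. (if i = a then f i else 1)) = f a"
    using Cons.prems assms(2) by (simp add: prod.delta')
  finally show ?case using Cons by simp
qed simp

lemma integral_gauss_monomial:
  assumes "finite I" "set L \<subseteq> I"
  shows "(\<integral>\<omega>. prod_list (map \<omega> L) \<partial>gauss_PiM I) = (\<Prod>i\<in>set L. gauss_moment (count_list L i))"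
proof -
  interpret product_sigma_finite "\<lambda>_. std_gauss" by (rule product_sigma_finite_std_gauss)
  have "(\<integral>\<omega>. prod_list (map \<omega> L) \<partial>gauss_PiM I)
      = (\<integral>\<omega>. (\<Prod>i\<in>I. (\<lambda>x. x ^ count_list L i) (\<omega> i)) \<partial>gauss_PiM I)"
    by (simp add: prod_list_map_eq_prod_count_list[OF assms(2,1)])
  also have "\<dots> = (\<Prod>i\<in>I. gauss_moment (count_list L i))"
    unfolding gauss_moment_def
    by (rule product_integral_prod) (auto simp: assms integrable_std_gauss_power)
  also have "\<dots> = (\<Prod>i\<in>set L. gauss_moment (count_list L i))"
    by (rule prod.mono_neutral_right) (use assms in \<open>auto simp: count_list_0_iff\<close>)
  finally show ?thesis .
qed

lemma integral_gauss_pair: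
  assumes "finite I" "a \<in> I" "b \<in> I"
  shows "(\<integral>\<omega>. \<omega> a * \<omega> b \<partial>gauss_PiM I) = (if a = b then 1 else 0)"
  using integral_gauss_monomial[OF assms(1), of "[a, b]"] assms by auto

lemma integral_gauss_quadruple:
  assumes "finite I" "a \<in> I" "b \<in> I" "c \<in> I" "e \<in> I"
  shows "(\<integral>\<omega>. \<omega> a * \<omega> b * \<omega> c * \<omega> e \<partial>gauss_PiM I) =
     (if a = b \<and> c = e then 1 else 0) + (if a = c \<and> b = e then 1 else 0) + (if a = e \<and> b = c then 1 else 0)"
  using integral_gauss_monomial[OF assms(1), of "[a, b, c, e]"] assms
  by (cases "a = b"; cases "a = c"; cases "a = e"; cases "b = c"; cases "b = e"; cases "c = e")
    (auto simp: mult.assoc insert_commute)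

lemma integral_gauss_monomial_append:
  assumes "finite I" "set L1 \<subseteq> I" "set L2 \<subseteq> I" "set L1 \<inter> set L2 = {}"
  shows "(\<integral>\<omega>. prod_list (map \<omega> (L1 @ L2)) \<partial>gauss_PiM I) =
         (\<integral>\<omega>. prod_list (map \<omega> L1) \<partial>gauss_PiM I) * (\<integral>\<omega>. prod_list (map \<omega> L2) \<partial>gauss_PiM I)"
proof -
  have "(\<integral>\<omega>. prod_list (map \<omega> (L1 @ L2)) \<partial>gauss_PiM I) =
     (\<Prod>i\<in>set L1 \<union> set L2. gauss_moment (count_list L1 i + count_list L2 i))"
    using integral_gauss_monomial[OF assms(1), of "L1 @ L2"] assms by simp
  also have "\<dots> = (\<Prod>i\<in>set L1. gauss_moment (count_list L1 i + count_list L2 i)) *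
                   (\<Prod>i\<in>set L2. gauss_moment (count_list L1 i + count_list L2 i))"
    by (rule prod.union_disjoint) (use assms in auto)
  also have "\<dots> = (\<Prod>i\<in>set L1. gauss_moment (count_list L1 i)) * (\<Prod>i\<in>set L2. gauss_moment (count_list L2 i))"
  proof -
    have "count_list L2 i = 0" if "i \<in> set L1" for i
      using that assms(4) by (auto simp: count_list_0_iff)
    moreover have "count_list L1 i = 0" if "i \<in> set L2" for i
      using that assms(4) by (auto simp: count_list_0_iff)
    ultimately show ?thesis by (intro arg_cong2[where f = "(*)"] prod.cong) auto
  qed
  finally show ?thesis
    using integral_gauss_monomial[OF assms(1,2)] integral_gauss_monomial[OF assms(1,3)] by simp
qed

lemma integral_gauss_pair_quadruple:
  assumes "finite I" "a \<in> I" "b \<in> I" "p \<in> I" "q \<in> I" "r \<in> I" "s \<in> I"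
    and "{a, b} \<inter> {p, q, r, s} = {}"
  shows "(\<integral>\<omega>. \<omega> a * \<omega> b * (\<omega> p * \<omega> q * \<omega> r * \<omega> s) \<partial>gauss_PiM I) =
     (if a = b then 1 else 0) * ((if p = q \<and> r = s then 1 else 0) + (if p = r \<and> q = s then 1 else 0)
                                  + (if p = s \<and> q = r then 1 else 0))"
proof -
  have "(\<integral>\<omega>. \<omega> a * \<omega> b * (\<omega> p * \<omega> q * \<omega> r * \<omega> s) \<partial>gauss_PiM I)
      = (\<integral>\<omega>. prod_list (map \<omega> ([a, b] @ [p, q, r, s])) \<partial>gauss_PiM I)"
    by (simp add: mult.assoc)
  also have "\<dots> = (\<integral>\<omega>. \<omega> a * \<omega> b \<partial>gauss_PiM I) * (\<integral>\<omega>. \<omega> p * \<omega> q * \<omega> r * \<omega> s \<partial>gauss_PiM I)"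
    by (subst integral_gauss_monomial_append) (use assms in \<open>auto simp: mult.assoc\<close>)
  finally show ?thesis
    using integral_gauss_pair[OF assms(1,2,3)] integral_gauss_quadruple[OF assms(1,4,5,6,7)] by simp
qed

section \<open>Random variables with finite moments\<close>

definition finite_moments :: "'a measure \<Rightarrow> ('a \<Rightarrow> real) \<Rightarrow> bool" where
  "finite_moments M f \<longleftrightarrow> f \<in> borel_measurable M \<and> (\<forall>p. integrable M (\<lambda>x. \<bar>f x\<bar> ^ p))"

lemma abs_add_power_le: "\<bar>a + b\<bar> ^ p \<le> 2 ^ p * (\<bar>a\<bar> ^ p + \<bar>b::real\<bar> ^ p)"
proof -
  have "\<bar>a + b\<bar> ^ p \<le> (2 * max \<bar>a\<bar> \<bar>b\<bar>) ^ p" by (rule power_mono) auto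
  also have "\<dots> = 2 ^ p * max \<bar>a\<bar> \<bar>b\<bar> ^ p" by (simp add: power_mult_distrib)
  also have "max \<bar>a\<bar> \<bar>b\<bar> ^ p \<le> \<bar>a\<bar> ^ p + \<bar>b\<bar> ^ p" by (simp add: max_def)
  finally show ?thesis by simp
qed

lemma abs_mult_power_le: "\<bar>a * b\<bar> ^ p \<le> \<bar>a\<bar> ^ (2 * p) + \<bar>b::real\<bar> ^ (2 * p)"
proof -
  have "\<bar>a * b\<bar> ^ p = \<bar>a\<bar> ^ p * \<bar>b\<bar> ^ p" by (simp add: abs_mult power_mult_distrib)
  also have "\<dots> \<le> 2 * (\<bar>a\<bar> ^ p * \<bar>b\<bar> ^ p)" by simp
  also have "\<dots> \<le> (\<bar>a\<bar> ^ p)\<^sup>2 + (\<bar>b\<bar> ^ p)\<^sup>2"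
    using sum_squares_bound[of "\<bar>a\<bar> ^ p" "\<bar>b\<bar> ^ p"] by (simp add: mult.assoc)
  also have "\<dots> = \<bar>a\<bar> ^ (2 * p) + \<bar>b\<bar> ^ (2 * p)" by (simp add: power_mult[symmetric] mult.commute)
  finally show ?thesis .
qed

lemma finite_moments_measurable: "finite_moments M f \<Longrightarrow> f \<in> borel_measurable M"
  unfolding finite_moments_def by auto

lemma finite_moments_integrable:
  assumes "finite_moments M f" shows "integrable M f"
proof -
  have "integrable M (\<lambda>x. \<bar>f x\<bar> ^ 1)" using assms unfolding finite_moments_def by blast
  then show ?thesis using finite_moments_measurable[OF assms] integrable_abs_iff[of f M] by simp
qed

lemma finite_moments_const: "finite_measure M \<Longrightarrow> finite_moments M (\<lambda>_. c)"
  unfolding finite_moments_def by (auto intro: finite_measure.integrable_const)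

lemma finite_moments_add:
  assumes f: "finite_moments M f" and g: "finite_moments M g"
  shows "finite_moments M (\<lambda>x. f x + g x)"
  unfolding finite_moments_def
proof (intro conjI allI)
  show "(\<lambda>x. f x + g x) \<in> borel_measurable M"
    using f g unfolding finite_moments_def by auto
  fix p :: nat
  show "integrable M (\<lambda>x. \<bar>f x + g x\<bar> ^ p)"
  proof (rule Bochner_Integration.integrable_bound)
    show "integrable M (\<lambda>x. 2 ^ p * (\<bar>f x\<bar> ^ p + \<bar>g x\<bar> ^ p))"
      using f g unfolding finite_moments_def by auto
    show "(\<lambda>x. \<bar>f x + g x\<bar> ^ p) \<in> borel_measurable M"
      using f g unfolding finite_moments_def by auto
    show "AE x in M. norm (\<bar>f x + g x\<bar> ^ p) \<le> norm (2 ^ p * (\<bar>f x\<bar> ^ p + \<bar>g x\<bar> ^ p))"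
      using abs_add_power_le by auto
  qed
qed

lemma finite_moments_mult:
  assumes f: "finite_moments M f" and g: "finite_moments M g"
  shows "finite_moments M (\<lambda>x. f x * g x)"
  unfolding finite_moments_def
proof (intro conjI allI)
  show "(\<lambda>x. f x * g x) \<in> borel_measurable M"
    using f g unfolding finite_moments_def by auto
  fix p :: nat
  show "integrable M (\<lambda>x. \<bar>f x * g x\<bar> ^ p)"
  proof (rule Bochner_Integration.integrable_bound)
    show "integrable M (\<lambda>x. \<bar>f x\<bar> ^ (2 * p) + \<bar>g x\<bar> ^ (2 * p))"
      using f g unfolding finite_moments_def by auto
    show "(\<lambda>x. \<bar>f x * g x\<bar> ^ p) \<in> borel_measurable M"
      using f g unfolding finite_moments_def by auto
    show "AE x in M. norm (\<bar>f x * g x\<bar> ^ p) \<le> norm (\<bar>f x\<bar> ^ (2 * p) + \<bar>g x\<bar> ^ (2 * p))"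
      using abs_mult_power_le by auto
  qed
qed

lemma finite_moments_uminus: "finite_moments M f \<Longrightarrow> finite_moments M (\<lambda>x. - f x)"
  unfolding finite_moments_def by auto

lemma finite_moments_diff:
  "finite_moments M f \<Longrightarrow> finite_moments M g \<Longrightarrow> finite_moments M (\<lambda>x. f x - g x)"
  using finite_moments_add[of M f "\<lambda>x. - g x"] finite_moments_uminus[of M g] by simp

lemma finite_moments_divide:
  "finite_measure M \<Longrightarrow> finite_moments M f \<Longrightarrow> finite_moments M (\<lambda>x. f x / c)"
  using finite_moments_mult[of M f "\<lambda>_. 1 / c"] finite_moments_const[of M "1 / c"] by simp

lemma finite_moments_sum:
  "finite_measure M \<Longrightarrow> (\<And>i. i \<in> A \<Longrightarrow> finite_moments M (f i))
    \<Longrightarrow> finite_moments M (\<lambda>x. \<Sum>i\<in>A. f i x)"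
  by (induction A rule: infinite_finite_induct) (auto intro: finite_moments_const finite_moments_add)

lemma finite_moments_gauss_coordinate:
  assumes "finite I" "i \<in> I"
  shows "finite_moments (gauss_PiM I) (\<lambda>\<omega>. \<omega> i)"
  unfolding finite_moments_def
proof (intro conjI allI)
  interpret product_sigma_finite "\<lambda>_. std_gauss" by (rule product_sigma_finite_std_gauss)
  show "(\<lambda>\<omega>. \<omega> i) \<in> borel_measurable (gauss_PiM I)"
    using assms(2) by measurable
  fix p :: nat
  let ?h = "\<lambda>k x. if k = i then \<bar>x\<bar> ^ p else 1 :: real"
  have "(\<lambda>\<omega>. \<bar>\<omega> i\<bar> ^ p) = (\<lambda>\<omega>. \<Prod>k\<in>I. ?h k (\<omega> k))"
    using assms by (simp add: prod.delta)
  moreover have "integrable std_gauss (?h k)" for k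
    using finite_measure.integrable_const[OF prob_space.finite_measure[OF prob_space_std_gauss]]
    by (cases "k = i") (simp_all add: integrable_std_gauss_abs_power)
  then have "integrable (gauss_PiM I) (\<lambda>\<omega>. \<Prod>k\<in>I. ?h k (\<omega> k))"
    by (intro product_integrable_prod assms)
  ultimately show "integrable (gauss_PiM I) (\<lambda>\<omega>. \<bar>\<omega> i\<bar> ^ p)" by simp
qed

lemmas finite_moments_intros =
  finite_moments_const finite_moments_add finite_moments_mult finite_moments_diff
  finite_moments_divide finite_moments_sum finite_measure_gauss_PiM finite_moments_gauss_coordinate

section \<open>The linear self-attention layer on Gaussian data\<close>

type_synonym sample = "nat + nat \<times> nat \<Rightarrow> real"

lemma finite_gauss_idx [simp]: "finite (gauss_idx d n)"
  unfolding gauss_idx_def by simp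

lemma Inl_in_gauss_idx [simp]: "Inl m \<in> gauss_idx d n \<longleftrightarrow> m < d"
  unfolding gauss_idx_def by auto

lemma Inr_in_gauss_idx [simp]: "Inr (c, k) \<in> gauss_idx d n \<longleftrightarrow> c < n \<and> k < d"
  unfolding gauss_idx_def by auto

definition label :: "nat \<Rightarrow> sample \<Rightarrow> nat \<Rightarrow> real" where
  "label d \<omega> c = (\<Sum>m<d. \<omega> (Inl m) * \<omega> (Inr (c, m)))"

(* \<gamma>^T X y^T / n, i.e. the coordinate along \<gamma> of the one-step gradient estimate of w* *)
definition xy_stat :: "nat \<Rightarrow> nat \<Rightarrow> (nat \<Rightarrow> real) \<Rightarrow> sample \<Rightarrow> real" where
  "xy_stat d n \<gamma> \<omega> = (\<Sum>c<n. (\<Sum>k<d. \<gamma> k * \<omega> (Inr (c, k))) * label d \<omega> c) / real n"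

abbreviation unit_vec :: "nat \<Rightarrow> nat \<Rightarrow> real" where
  "unit_vec j \<equiv> \<lambda>k. if k = j then 1 else 0"

lemma finite_moments_label: "c < n \<Longrightarrow> finite_moments (gauss_PiM (gauss_idx d n)) (\<lambda>\<omega>. label d \<omega> c)"
  unfolding label_def by (intro finite_moments_intros) auto

lemma finite_moments_xy_stat: "finite_moments (gauss_PiM (gauss_idx d n)) (xy_stat d n \<gamma>)"
  unfolding xy_stat_def by (intro finite_moments_intros finite_moments_label) auto

lemma xy_stat_unit_vec:
  "j < d \<Longrightarrow> xy_stat d n (unit_vec j) \<omega> = (\<Sum>c<n. \<omega> (Inr (c, j)) * label d \<omega> c) / real n"
  unfolding xy_stat_def by (simp add: if_distrib[of "\<lambda>x. x * _"] cong: if_cong)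

lemma Z0_last_column: "Z0 d n \<omega> q n = (if q = 2 * d + 1 then 1 else 0)"
  unfolding Z0_def by simp

lemma Z0_data_column: "c < n \<Longrightarrow> Z0 d n \<omega> p c =
   (if p < d then \<omega> (Inr (c, p)) else if p = d then label d \<omega> c else 0)"
  unfolding Z0_def label_def by simp

lemma sum_lessThan_vanishing_above:
  fixes f :: "nat \<Rightarrow> 'a :: comm_monoid_add"
  assumes "\<And>p. d < p \<Longrightarrow> p < m \<Longrightarrow> f p = 0" "d < m"
  shows "(\<Sum>p<m. f p) = (\<Sum>p<d. f p) + f d"
proof -
  have "(\<Sum>p<m. f p) = (\<Sum>p<Suc d. f p)"
    by (rule sum.mono_neutral_right) (use assms in auto)
  then show ?thesis by simp
qed

lemma lsa_attention_Z0:
  "(\<Sum>a<emb_dim d. V r a * (\<Sum>c\<le>n. Z0 d n \<omega> a c *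
       (\<Sum>p<emb_dim d. \<Sum>q<emb_dim d. Z0 d n \<omega> p c * W p q * Z0 d n \<omega> q n))) =
   (\<Sum>c<n. ((\<Sum>a<d. V r a * \<omega> (Inr (c, a))) + V r d * label d \<omega> c) *
            ((\<Sum>p<d. \<omega> (Inr (c, p)) * W p (2 * d + 1)) + label d \<omega> c * W d (2 * d + 1)))
   + V r (2 * d + 1) * W (2 * d + 1) (2 * d + 1)"
proof -
  let ?Z = "Z0 d n \<omega>"
  let ?l = "2 * d + 1"
  have de: "emb_dim d = Suc ?l" unfolding emb_dim_def by simp
  define s where "s c = (\<Sum>p<emb_dim d. ?Z p c * W p ?l)" for c
  have attention: "(\<Sum>p<emb_dim d. \<Sum>q<emb_dim d. ?Z p c * W p q * ?Z q n) = s c" for c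
    unfolding s_def Z0_last_column de by (simp add: if_distrib[of "\<lambda>x. _ * x"] cong: if_cong)
  have s_data: "s c = (\<Sum>p<d. \<omega> (Inr (c, p)) * W p ?l) + label d \<omega> c * W d ?l" if "c < n" for c
    unfolding s_def de using that
    by (subst sum_lessThan_vanishing_above[where d = d]) (auto simp: Z0_data_column)
  have s_last: "s n = W ?l ?l"
    unfolding s_def Z0_last_column de by (simp add: if_distrib[of "\<lambda>x. x * _"] cong: if_cong)
  have value_data: "(\<Sum>a<emb_dim d. V r a * ?Z a c)
      = (\<Sum>a<d. V r a * \<omega> (Inr (c, a))) + V r d * label d \<omega> c" if "c < n" for c
    unfolding de using that
    by (subst sum_lessThan_vanishing_above[where d = d]) (auto simp: Z0_data_column)
  have value_last: "(\<Sum>a<emb_dim d. V r a * ?Z a n) = V r ?l"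
    unfolding Z0_last_column de by (simp add: if_distrib[of "\<lambda>x. _ * x"] cong: if_cong)
  have "(\<Sum>a<emb_dim d. V r a * (\<Sum>c\<le>n. ?Z a c * (\<Sum>p<emb_dim d. \<Sum>q<emb_dim d. ?Z p c * W p q * ?Z q n)))
      = (\<Sum>c\<le>n. (\<Sum>a<emb_dim d. V r a * ?Z a c) * s c)"
    unfolding attention sum_distrib_left sum_distrib_right by (subst sum.swap) (simp add: mult.assoc)
  also have "\<dots> = (\<Sum>c<n. (\<Sum>a<emb_dim d. V r a * ?Z a c) * s c) + V r ?l * W ?l ?l"
    by (simp add: lessThan_Suc_atMost[symmetric] value_last s_last)
  also have "(\<Sum>c<n. (\<Sum>a<emb_dim d. V r a * ?Z a c) * s c) =
      (\<Sum>c<n. ((\<Sum>a<d. V r a * \<omega> (Inr (c, a))) + V r d * label d \<omega> c) *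
               ((\<Sum>p<d. \<omega> (Inr (c, p)) * W p ?l) + label d \<omega> c * W d ?l))"
    by (rule sum.cong) (auto simp: value_data s_data)
  finally show ?thesis .
qed


lemma lsa_last_Z0:
  "lsa_last d n V W (Z0 d n \<omega>) r =
     (if r = 2 * d + 1 then 1 else 0) +
     ((\<Sum>c<n. ((\<Sum>a<d. V r a * \<omega> (Inr (c, a))) + V r d * label d \<omega> c) *
               ((\<Sum>p<d. \<omega> (Inr (c, p)) * W p (2 * d + 1)) + label d \<omega> c * W d (2 * d + 1)))
      + V r (2 * d + 1) * W (2 * d + 1) (2 * d + 1)) / real n"
  unfolding lsa_last_def lsa_attention_Z0 by (simp add: Z0_last_column)

lemma finite_moments_lsa_last:
  "finite_moments (gauss_PiM (gauss_idx d n)) (\<lambda>\<omega>. lsa_last d n V W (Z0 d n \<omega>) r)"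
  unfolding lsa_last_Z0 by (intro finite_moments_intros finite_moments_label) auto

definition flip_w :: "nat \<Rightarrow> nat \<Rightarrow> sample \<Rightarrow> sample" where
  "flip_w d n \<omega> = restrict (\<lambda>i. if isl i then - \<omega> i else \<omega> i) (gauss_idx d n)"

lemma flip_w_Inl [simp]: "m < d \<Longrightarrow> flip_w d n \<omega> (Inl m) = - \<omega> (Inl m)"
  unfolding flip_w_def by simp

lemma flip_w_Inr [simp]: "c < n \<Longrightarrow> k < d \<Longrightarrow> flip_w d n \<omega> (Inr (c, k)) = \<omega> (Inr (c, k))"
  unfolding flip_w_def by simp

lemma label_flip_w [simp]: "c < n \<Longrightarrow> label d (flip_w d n \<omega>) c = - label d \<omega> c"
  unfolding label_def by (simp add: sum_negf[symmetric])

lemma xy_stat_flip_w [simp]: "xy_stat d n \<gamma> (flip_w d n \<omega>) = - xy_stat d n \<gamma> \<omega>"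
proof -
  have "(\<Sum>c<n. (\<Sum>k<d. \<gamma> k * flip_w d n \<omega> (Inr (c, k))) * label d (flip_w d n \<omega>) c) =
        (\<Sum>c<n. - ((\<Sum>k<d. \<gamma> k * \<omega> (Inr (c, k))) * label d \<omega> c))"
    by (intro sum.cong refl) auto
  then show ?thesis unfolding xy_stat_def by (simp add: sum_negf)
qed

lemma integral_flip_w:
  fixes g :: "sample \<Rightarrow> real"
  assumes "g \<in> borel_measurable (gauss_PiM (gauss_idx d n))"
  shows "(\<integral>\<omega>. g \<omega> \<partial>gauss_PiM (gauss_idx d n)) = (\<integral>\<omega>. g (flip_w d n \<omega>) \<partial>gauss_PiM (gauss_idx d n))"
  using integral_gauss_PiM_sign_flip[OF finite_gauss_idx assms, where s = isl]
  unfolding flip_w_def .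

lemma lsa_last_Z0_flip_w:
  fixes d n r :: nat
  defines "l \<equiv> 2 * d + 1"
  shows "lsa_last d n V W (Z0 d n \<omega>) r - lsa_last d n V W (Z0 d n (flip_w d n \<omega>)) r =
         2 * xy_stat d n (\<lambda>k. W d l * V r k + V r d * W k l) \<omega>"
proof -
  define u where "u c = (\<Sum>a<d. V r a * \<omega> (Inr (c, a)))" for c
  define a where "a c = (\<Sum>p<d. \<omega> (Inr (c, p)) * W p l)" for c
  define y where "y c = label d \<omega> c" for c
  have "lsa_last d n V W (Z0 d n \<omega>) r = (if r = l then 1 else 0) +
     ((\<Sum>c<n. (u c + V r d * y c) * (a c + y c * W d l)) + V r l * W l l) / real n"
    unfolding lsa_last_Z0 u_def a_def y_def l_def by simp
  moreover have "lsa_last d n V W (Z0 d n (flip_w d n \<omega>)) r = (if r = l then 1 else 0) +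
     ((\<Sum>c<n. (u c - V r d * y c) * (a c - y c * W d l)) + V r l * W l l) / real n"
  proof -
    have "(\<Sum>c<n. ((\<Sum>a<d. V r a * flip_w d n \<omega> (Inr (c, a))) + V r d * label d (flip_w d n \<omega>) c) *
               ((\<Sum>p<d. flip_w d n \<omega> (Inr (c, p)) * W p l) + label d (flip_w d n \<omega>) c * W d l)) =
          (\<Sum>c<n. (u c - V r d * y c) * (a c - y c * W d l))"
      by (intro sum.cong refl) (simp add: u_def a_def y_def)
    then show ?thesis unfolding lsa_last_Z0 l_def by simp
  qed
  moreover have "(\<Sum>k<d. (W d l * V r k + V r d * W k l) * \<omega> (Inr (c, k))) = W d l * u c + V r d * a c" for c
    unfolding u_def a_def by (simp add: sum.distrib sum_distrib_left algebra_simps)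
  moreover have "(\<Sum>c<n. (u c + V r d * y c) * (a c + y c * W d l)) - (\<Sum>c<n. (u c - V r d * y c) * (a c - y c * W d l))
      = (\<Sum>c<n. 2 * ((W d l * u c + V r d * a c) * y c))"
    by (simp only: sum_subtractf[symmetric]) (intro sum.cong refl, simp add: algebra_simps)
  ultimately show ?thesis
    unfolding xy_stat_def y_def by (simp add: diff_divide_distrib[symmetric] sum_distrib_left[symmetric])
qed

lemma integral_triple_sum:
  fixes f :: "'i \<Rightarrow> 'j \<Rightarrow> 'k \<Rightarrow> 'a \<Rightarrow> real"
  assumes "\<And>a b c. a \<in> A \<Longrightarrow> b \<in> B \<Longrightarrow> c \<in> C \<Longrightarrow> integrable M (f a b c)"
  shows "(\<integral>x. (\<Sum>a\<in>A. \<Sum>b\<in>B. \<Sum>c\<in>C. g a b c * f a b c x) \<partial>M) =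
         (\<Sum>a\<in>A. \<Sum>b\<in>B. \<Sum>c\<in>C. g a b c * (\<integral>x. f a b c x \<partial>M))"
  using assms by (simp add: integrable_sum)

lemma integral_w_xy_stat:
  assumes j: "j < d" and n: "1 \<le> n"
  shows "(\<integral>\<omega>. \<omega> (Inl j) * xy_stat d n \<gamma> \<omega> \<partial>gauss_PiM (gauss_idx d n)) = \<gamma> j"
proof -
  have "(\<lambda>\<omega>. \<omega> (Inl j) * xy_stat d n \<gamma> \<omega>) = (\<lambda>\<omega>. \<Sum>c<n. \<Sum>m<d. \<Sum>k<d. (\<gamma> k / real n) *
      (\<omega> (Inl j) * \<omega> (Inl m) * \<omega> (Inr (c, k)) * \<omega> (Inr (c, m))))"
    by (auto simp: xy_stat_def label_def sum_distrib_left sum_distrib_right sum_divide_distrib sum_product mult_ac)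
  then have "(\<integral>\<omega>. \<omega> (Inl j) * xy_stat d n \<gamma> \<omega> \<partial>gauss_PiM (gauss_idx d n)) =
      (\<Sum>c<n. \<Sum>m<d. \<Sum>k<d. (\<gamma> k / real n) *
      (\<integral>\<omega>. \<omega> (Inl j) * \<omega> (Inl m) * \<omega> (Inr (c, k)) * \<omega> (Inr (c, m)) \<partial>gauss_PiM (gauss_idx d n)))"
    using j by (simp only:) (intro integral_triple_sum finite_moments_integrable finite_moments_intros; simp)
  also have "\<dots> = (\<Sum>c<n. \<Sum>m<d. \<Sum>k<d. (\<gamma> k / real n) * (if j = m \<and> k = m then 1 else 0))"
    using j by (simp add: integral_gauss_quadruple)
  also have "\<dots> = (\<Sum>c<n. \<gamma> j / real n)"
  proof -
    have "(\<Sum>k<d. (\<gamma> k / real n) * (if j = m \<and> k = m then 1 else 0)) = (if m = j then \<gamma> j / real n else 0)" for m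
      using j by (cases "m = j") (auto simp: if_distrib[of "\<lambda>x. _ * x"] cong: if_cong)
    then show ?thesis using j by simp
  qed
  also have "\<dots> = \<gamma> j" using n by simp
  finally show ?thesis .
qed

lemma integral_label_products:
  assumes j: "j < d" and c: "c < n" and c': "c' < n"
  shows "(\<integral>\<omega>. (\<omega> (Inr (c', j)) * label d \<omega> c') * ((\<Sum>k<d. \<gamma> k * \<omega> (Inr (c, k))) * label d \<omega> c)
            \<partial>gauss_PiM (gauss_idx d n))
       = (if c' = c then real d + 2 else 1) * \<gamma> j"
proof -
  let ?M = "gauss_PiM (gauss_idx d n)"
  let ?F = "\<lambda>m' k m :: nat. (if j = m' \<and> k = m then 1 else 0) + (if c' = c \<and> j = k \<and> m' = m then 1 else 0)
                            + (if c' = c \<and> j = m \<and> m' = k then 1 else (0 :: real))"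
  have "(\<lambda>\<omega>. (\<omega> (Inr (c', j)) * label d \<omega> c') * ((\<Sum>k<d. \<gamma> k * \<omega> (Inr (c, k))) * label d \<omega> c)) =
     (\<lambda>\<omega>. \<Sum>m<d. \<Sum>k<d. \<Sum>m'<d. \<gamma> k * (\<omega> (Inl m') * \<omega> (Inl m) *
         (\<omega> (Inr (c', j)) * \<omega> (Inr (c', m')) * \<omega> (Inr (c, k)) * \<omega> (Inr (c, m)))))"
    by (auto simp: label_def sum_distrib_left sum_distrib_right sum_product mult_ac)
  then have "(\<integral>\<omega>. (\<omega> (Inr (c', j)) * label d \<omega> c') * ((\<Sum>k<d. \<gamma> k * \<omega> (Inr (c, k))) * label d \<omega> c) \<partial>?M)
     = (\<Sum>m<d. \<Sum>k<d. \<Sum>m'<d. \<gamma> k * (\<integral>\<omega>. \<omega> (Inl m') * \<omega> (Inl m) *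
         (\<omega> (Inr (c', j)) * \<omega> (Inr (c', m')) * \<omega> (Inr (c, k)) * \<omega> (Inr (c, m))) \<partial>?M))"
    using j c c' by (simp only:) (intro integral_triple_sum finite_moments_integrable finite_moments_intros; simp)
  also have "\<dots> = (\<Sum>m<d. \<Sum>k<d. \<Sum>m'<d. \<gamma> k * ((if m' = m then 1 else 0) * ?F m' k m))"
    using j c c' by (intro sum.cong refl, subst integral_gauss_pair_quadruple) auto
  also have "\<dots> = (\<Sum>m<d. \<Sum>k<d. \<gamma> k * ?F m k m)"
    by (intro sum.cong refl) (simp add: if_distrib[of "\<lambda>x. x * _"] if_distrib[of "\<lambda>x. _ * x"] cong: if_cong)
  also have "\<dots> = (\<Sum>k<d. \<Sum>m<d. \<gamma> k * ?F m k m)"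
    by (rule sum.swap)
  also have "\<dots> = (\<Sum>k<d. if k = j then (if c' = c then real d + 2 else 1) * \<gamma> j else 0)"
  proof (rule sum.cong[OF refl])
    fix k assume "k \<in> {..<d}"
    show "(\<Sum>m<d. \<gamma> k * ?F m k m) = (if k = j then (if c' = c then real d + 2 else 1) * \<gamma> j else 0)"
      using j by (cases "k = j"; cases "c' = c")
        (simp_all add: sum.distrib if_if_eq_conj[symmetric] flip: sum_distrib_left cong: if_cong)
  qed
  also have "\<dots> = (if c' = c then real d + 2 else 1) * \<gamma> j"
    using j by simp
  finally show ?thesis .
qed

lemma integral_xy_stat_unit_vec:
  assumes j: "j < d" and n: "1 \<le> n"
  shows "(\<integral>\<omega>. xy_stat d n (unit_vec j) \<omega> * xy_stat d n \<gamma> \<omega> \<partial>gauss_PiM (gauss_idx d n)) =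
     (real n + real d + 1) / real n * \<gamma> j"
proof -
  let ?M = "gauss_PiM (gauss_idx d n)"
  let ?A = "\<lambda>c' \<omega>. \<omega> (Inr (c', j)) * label d \<omega> c'"
  let ?B = "\<lambda>c \<omega>. (\<Sum>k<d. \<gamma> k * \<omega> (Inr (c, k))) * label d \<omega> c"
  have AB: "integrable ?M (\<lambda>\<omega>. ?A c' \<omega> * ?B c \<omega>)" if "c < n" "c' < n" for c c'
    using that j by (intro finite_moments_integrable finite_moments_intros finite_moments_label) auto
  have sum_if: "(\<Sum>c<n. (if c' = c then real d + 2 else 1)) = real n + real d + 1" if "c' < n" for c'
  proof -
    have "(\<Sum>c<n. (if c' = c then real d + 2 else 1)) = (\<Sum>c<n. 1 + (if c' = c then real d + 1 else 0))"
      by (intro sum.cong) auto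
    then show ?thesis using that by (simp add: sum.distrib)
  qed
  have "(\<lambda>\<omega>. xy_stat d n (unit_vec j) \<omega> * xy_stat d n \<gamma> \<omega>) =
        (\<lambda>\<omega>. (\<Sum>c'<n. \<Sum>c<n. ?A c' \<omega> * ?B c \<omega>) / real n ^ 2)"
    unfolding xy_stat_unit_vec[OF j] by (simp add: xy_stat_def power2_eq_square sum_product)
  moreover have "integrable ?M (\<lambda>\<omega>. \<Sum>c<n. ?A c' \<omega> * ?B c \<omega>)" if "c' < n" for c'
    using AB that by (intro Bochner_Integration.integrable_sum) auto
  ultimately have "(\<integral>\<omega>. xy_stat d n (unit_vec j) \<omega> * xy_stat d n \<gamma> \<omega> \<partial>?M) =
        (\<Sum>c'<n. \<Sum>c<n. (\<integral>\<omega>. ?A c' \<omega> * ?B c \<omega> \<partial>?M)) / real n ^ 2"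
    using AB by (simp add: Bochner_Integration.integral_sum)
  also have "\<dots> = (\<Sum>c'<n. \<Sum>c<n. (if c' = c then real d + 2 else 1) * \<gamma> j) / real n ^ 2"
    using j by (simp add: integral_label_products)
  also have "\<dots> = (real n + real d + 1) / real n * \<gamma> j"
    using n by (simp add: sum_distrib_right[symmetric] sum_if power2_eq_square)
  finally show ?thesis .
qed

section \<open>The residual of the task vector\<close>

definition proj_coeff :: "nat \<Rightarrow> nat \<Rightarrow> real" where
  "proj_coeff d n = real n / (real n + real d + 1)"

definition residual :: "nat \<Rightarrow> nat \<Rightarrow> nat \<Rightarrow> sample \<Rightarrow> real" where
  "residual d n j \<omega> = \<omega> (Inl j) - proj_coeff d n * xy_stat d n (unit_vec j) \<omega>"

lemma finite_moments_residual: "j < d \<Longrightarrow> finite_moments (gauss_PiM (gauss_idx d n)) (residual d n j)"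
  unfolding residual_def by (intro finite_moments_intros finite_moments_xy_stat) auto

lemma residual_flip_w [simp]: "j < d \<Longrightarrow> residual d n j (flip_w d n \<omega>) = - residual d n j \<omega>"
  unfolding residual_def by simp

lemma integral_residual_xy_stat:
  assumes j: "j < d" and n: "1 \<le> n"
  shows "(\<integral>\<omega>. residual d n j \<omega> * xy_stat d n \<gamma> \<omega> \<partial>gauss_PiM (gauss_idx d n)) = 0"
proof -
  let ?M = "gauss_PiM (gauss_idx d n)"
  have "integrable ?M (\<lambda>\<omega>. \<omega> (Inl j) * xy_stat d n \<gamma> \<omega>)"
       "integrable ?M (\<lambda>\<omega>. xy_stat d n (unit_vec j) \<omega> * xy_stat d n \<gamma> \<omega>)"
    using j by (intro finite_moments_integrable finite_moments_intros finite_moments_xy_stat; simp)+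
  moreover have "residual d n j \<omega> * xy_stat d n \<gamma> \<omega> = \<omega> (Inl j) * xy_stat d n \<gamma> \<omega>
      - proj_coeff d n * (xy_stat d n (unit_vec j) \<omega> * xy_stat d n \<gamma> \<omega>)" for \<omega>
    unfolding residual_def by (simp add: algebra_simps)
  ultimately have "(\<integral>\<omega>. residual d n j \<omega> * xy_stat d n \<gamma> \<omega> \<partial>?M)
      = \<gamma> j - proj_coeff d n * ((real n + real d + 1) / real n * \<gamma> j)"
    by (simp add: integral_w_xy_stat[OF j n] integral_xy_stat_unit_vec[OF j n])
  also have "\<dots> = 0"
    using n by (simp add: proj_coeff_def)
  finally show ?thesis .
qed

lemma integral_residual_w:
  assumes j: "j < d" and n: "1 \<le> n"
  shows "(\<integral>\<omega>. residual d n j \<omega> * \<omega> (Inl j) \<partial>gauss_PiM (gauss_idx d n)) = 1 - proj_coeff d n"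
proof -
  let ?M = "gauss_PiM (gauss_idx d n)"
  have "integrable ?M (\<lambda>\<omega>. \<omega> (Inl j) * \<omega> (Inl j))"
       "integrable ?M (\<lambda>\<omega>. \<omega> (Inl j) * xy_stat d n (unit_vec j) \<omega>)"
    using j by (intro finite_moments_integrable finite_moments_intros finite_moments_xy_stat; simp)+
  moreover have "residual d n j \<omega> * \<omega> (Inl j) = \<omega> (Inl j) * \<omega> (Inl j)
      - proj_coeff d n * (\<omega> (Inl j) * xy_stat d n (unit_vec j) \<omega>)" for \<omega>
    unfolding residual_def by (simp add: algebra_simps)
  ultimately show ?thesis
    using j by (simp add: integral_w_xy_stat[OF j n] integral_gauss_pair)
qed

lemma integral_residual_sq:
  assumes j: "j < d" and n: "1 \<le> n"
  shows "(\<integral>\<omega>. residual d n j \<omega> * residual d n j \<omega> \<partial>gauss_PiM (gauss_idx d n)) = 1 - proj_coeff d n"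
proof -
  let ?M = "gauss_PiM (gauss_idx d n)"
  have "integrable ?M (\<lambda>\<omega>. residual d n j \<omega> * \<omega> (Inl j))"
       "integrable ?M (\<lambda>\<omega>. residual d n j \<omega> * xy_stat d n (unit_vec j) \<omega>)"
    using j by (intro finite_moments_integrable finite_moments_intros finite_moments_xy_stat
        finite_moments_residual; simp)+
  moreover have "residual d n j \<omega> * residual d n j \<omega> =
      residual d n j \<omega> * \<omega> (Inl j) - proj_coeff d n * (residual d n j \<omega> * xy_stat d n (unit_vec j) \<omega>)" for \<omega>
    by (subst (2) residual_def) (simp add: algebra_simps)
  ultimately show ?thesis
    by (simp add: integral_residual_w[OF j n] integral_residual_xy_stat[OF j n])
qed

lemma integral_residual_lsa_last:
  assumes j: "j < d" and n: "1 \<le> n"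
  shows "(\<integral>\<omega>. residual d n j \<omega> * lsa_last d n V W (Z0 d n \<omega>) r \<partial>gauss_PiM (gauss_idx d n)) = 0"
proof -
  let ?M = "gauss_PiM (gauss_idx d n)"
  let ?T = "residual d n j"
  let ?P = "\<lambda>\<omega>. lsa_last d n V W (Z0 d n \<omega>) r"
  let ?Q = "xy_stat d n (\<lambda>k. W d (2 * d + 1) * V r k + V r d * W k (2 * d + 1))"
  have TP: "finite_moments ?M (\<lambda>\<omega>. ?T \<omega> * ?P \<omega>)"
    using j by (intro finite_moments_mult finite_moments_residual finite_moments_lsa_last)
  have TQ: "integrable ?M (\<lambda>\<omega>. ?T \<omega> * ?Q \<omega>)"
    using j by (intro finite_moments_integrable finite_moments_mult finite_moments_residual finite_moments_xy_stat)
  have "(\<integral>\<omega>. ?T \<omega> * ?P \<omega> \<partial>?M) = (\<integral>\<omega>. ?T (flip_w d n \<omega>) * ?P (flip_w d n \<omega>) \<partial>?M)"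
    by (rule integral_flip_w) (rule finite_moments_measurable[OF TP])
  also have "\<dots> = (\<integral>\<omega>. 2 * (?T \<omega> * ?Q \<omega>) - ?T \<omega> * ?P \<omega> \<partial>?M)"
  proof (rule Bochner_Integration.integral_cong[OF refl])
    fix \<omega>
    have P_flip: "?P (flip_w d n \<omega>) = ?P \<omega> - 2 * ?Q \<omega>"
      using lsa_last_Z0_flip_w[of d n V W \<omega> r] by simp
    show "?T (flip_w d n \<omega>) * ?P (flip_w d n \<omega>) = 2 * (?T \<omega> * ?Q \<omega>) - ?T \<omega> * ?P \<omega>"
      unfolding P_flip residual_flip_w[OF j] by (simp add: algebra_simps)
  qed
  also have "\<dots> = - (\<integral>\<omega>. ?T \<omega> * ?P \<omega> \<partial>?M)"
    using finite_moments_integrable[OF TP] TQ by (simp add: integral_residual_xy_stat[OF j n])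
  finally show ?thesis by simp
qed

lemma lsa_last_error_ge:
  assumes j: "j < d" and n: "1 \<le> n"
  shows "1 - proj_coeff d n \<le>
    (\<integral>\<omega>. (lsa_last d n V W (Z0 d n \<omega>) r - \<omega> (Inl j))\<^sup>2 \<partial>gauss_PiM (gauss_idx d n))"
proof -
  let ?M = "gauss_PiM (gauss_idx d n)"
  let ?P = "\<lambda>\<omega>. lsa_last d n V W (Z0 d n \<omega>) r"
  let ?T = "residual d n j"
  have "integrable ?M (\<lambda>\<omega>. (?P \<omega> - \<omega> (Inl j))\<^sup>2)"
       "integrable ?M (\<lambda>\<omega>. ?T \<omega> * ?P \<omega>)" "integrable ?M (\<lambda>\<omega>. ?T \<omega> * \<omega> (Inl j))"
       "integrable ?M (\<lambda>\<omega>. ?T \<omega> * ?T \<omega>)"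
    unfolding power2_eq_square using j
    by (intro finite_moments_integrable finite_moments_intros finite_moments_lsa_last
        finite_moments_residual; simp)+
  moreover have "(?P \<omega> - \<omega> (Inl j) + ?T \<omega>)\<^sup>2 = (?P \<omega> - \<omega> (Inl j))\<^sup>2 + 2 * (?T \<omega> * ?P \<omega>)
      - 2 * (?T \<omega> * \<omega> (Inl j)) + ?T \<omega> * ?T \<omega>" for \<omega>
    by (simp add: power2_eq_square algebra_simps)
  ultimately have "(\<integral>\<omega>. (?P \<omega> - \<omega> (Inl j) + ?T \<omega>)\<^sup>2 \<partial>?M)
      = (\<integral>\<omega>. (?P \<omega> - \<omega> (Inl j))\<^sup>2 \<partial>?M) + 2 * (\<integral>\<omega>. ?T \<omega> * ?P \<omega> \<partial>?M)
        - 2 * (\<integral>\<omega>. ?T \<omega> * \<omega> (Inl j) \<partial>?M) + (\<integral>\<omega>. ?T \<omega> * ?T \<omega> \<partial>?M)"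
    by (simp only:) simp
  also have "\<dots> = (\<integral>\<omega>. (?P \<omega> - \<omega> (Inl j))\<^sup>2 \<partial>?M) - (1 - proj_coeff d n)"
    by (simp add: integral_residual_lsa_last[OF j n] integral_residual_w[OF j n]
        integral_residual_sq[OF j n])
  moreover have "0 \<le> (\<integral>\<omega>. (?P \<omega> - \<omega> (Inl j) + ?T \<omega>)\<^sup>2 \<partial>?M)"
    by simp
  ultimately show ?thesis by linarith
qed

section \<open>Bounds on the evaluation loss\<close>

lemma finite_moments_target_last:
  "finite_moments (gauss_PiM (gauss_idx d n)) (\<lambda>\<omega>. target_last d \<omega> r)"
  unfolding target_last_def
  by (cases "d < r \<and> r \<le> 2 * d") (auto intro!: finite_moments_intros)

lemma eval_loss_ge:
  assumes n: "1 \<le> n"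
  shows "real d * (real d + 1) / (2 * (real n + real d + 1)) \<le> eval_loss d n V W"
proof -
  let ?M = "gauss_PiM (gauss_idx d n)"
  let ?err = "\<lambda>\<omega> r. (lsa_last d n V W (Z0 d n \<omega>) r - target_last d \<omega> r)\<^sup>2"
  let ?row_err = "\<lambda>\<omega> j. (lsa_last d n V W (Z0 d n \<omega>) (d + 1 + j) - \<omega> (Inl j))\<^sup>2"
  have row_integrable: "integrable ?M (\<lambda>\<omega>. ?row_err \<omega> j)" if "j < d" for j
    unfolding power2_eq_square using that
    by (intro finite_moments_integrable finite_moments_intros finite_moments_lsa_last) auto
  have rows_le_all: "(\<Sum>j<d. ?row_err \<omega> j) \<le> (\<Sum>r<emb_dim d. ?err \<omega> r)" for \<omega>
  proof -
    have "(\<Sum>j<d. ?row_err \<omega> j) = (\<Sum>j<d. ?err \<omega> (d + 1 + j))"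
      by (intro sum.cong refl) (simp add: target_last_def)
    also have "\<dots> = sum (?err \<omega>) ((\<lambda>j. d + 1 + j) ` {..<d})"
      by (subst sum.reindex) (auto simp: inj_on_def)
    also have "\<dots> \<le> (\<Sum>r<emb_dim d. ?err \<omega> r)"
      by (rule sum_mono2) (auto simp: emb_dim_def)
    finally show ?thesis .
  qed
  have "real d * (real d + 1) / (2 * (real n + real d + 1)) = (1 / 2) * (\<Sum>j<d. 1 - proj_coeff d n)"
    using n by (simp add: proj_coeff_def field_simps)
  also have "\<dots> \<le> (1 / 2) * (\<Sum>j<d. \<integral>\<omega>. ?row_err \<omega> j \<partial>?M)"
    by (intro mult_left_mono sum_mono lsa_last_error_ge n) auto
  also have "\<dots> = (1 / 2) * (\<integral>\<omega>. (\<Sum>j<d. ?row_err \<omega> j) \<partial>?M)"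
    using row_integrable by (simp add: Bochner_Integration.integral_sum)
  also have "\<dots> \<le> (1 / 2) * (\<integral>\<omega>. (\<Sum>r<emb_dim d. ?err \<omega> r) \<partial>?M)"
  proof -
    have "integrable ?M (\<lambda>\<omega>. \<Sum>j<d. ?row_err \<omega> j)"
      using row_integrable by (intro Bochner_Integration.integrable_sum) auto
    moreover have "integrable ?M (\<lambda>\<omega>. \<Sum>r<emb_dim d. ?err \<omega> r)"
      unfolding power2_eq_square
      by (intro finite_moments_integrable finite_moments_intros finite_moments_lsa_last
          finite_moments_target_last)
    ultimately show ?thesis
      by (intro mult_left_mono integral_mono rows_le_all) auto
  qed
  finally show ?thesis
    unfolding eval_loss_def data_measure_def .
qed

lemma eval_loss_nonneg: "0 \<le> eval_loss d n V W"
  unfolding eval_loss_def by (simp add: sum_nonneg)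

lemma eval_loss_zero_params: "eval_loss d n (\<lambda>_ _. 0) (\<lambda>_ _. 0) = real d / 2"
proof -
  let ?M = "gauss_PiM (gauss_idx d n)"
  have "(\<Sum>r<emb_dim d. (lsa_last d n (\<lambda>_ _. 0) (\<lambda>_ _. 0) (Z0 d n \<omega>) r - target_last d \<omega> r)\<^sup>2)
      = (\<Sum>j<d. \<omega> (Inl j) * \<omega> (Inl j))" for \<omega>
  proof -
    have "(\<Sum>r<emb_dim d. (lsa_last d n (\<lambda>_ _. 0) (\<lambda>_ _. 0) (Z0 d n \<omega>) r - target_last d \<omega> r)\<^sup>2)
        = (\<Sum>r\<in>{d + 1..<2 * d + 1}. (\<omega> (Inl (r - d - 1)))\<^sup>2)"
      by (rule sum.mono_neutral_cong_right)
        (auto simp: emb_dim_def lsa_last_def Z0_last_column target_last_def)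
    also have "\<dots> = (\<Sum>j<d. \<omega> (Inl j) * \<omega> (Inl j))"
      by (rule sum.reindex_bij_witness[where i = "\<lambda>j. j + d + 1" and j = "\<lambda>r. r - d - 1"])
        (auto simp: power2_eq_square)
    finally show ?thesis .
  qed
  moreover have "(\<integral>\<omega>. (\<Sum>j<d. \<omega> (Inl j) * \<omega> (Inl j)) \<partial>?M) = real d"
    by (subst Bochner_Integration.integral_sum)
      (auto intro!: finite_moments_integrable finite_moments_intros simp: integral_gauss_pair)
  ultimately show ?thesis
    unfolding eval_loss_def data_measure_def by simp
qed

lemma opt_eval_loss_le: "opt_eval_loss d n \<le> eval_loss d n V W"
proof -
  have "bdd_below (range (\<lambda>VW. eval_loss d n (fst VW) (snd VW)))"
    by (rule bdd_belowI2[where m = 0]) (rule eval_loss_nonneg)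
  then show ?thesis
    unfolding opt_eval_loss_def using cINF_lower[of _ UNIV "(V, W)"] by fastforce
qed

lemma opt_eval_loss_greatest: "(\<And>V W. c \<le> eval_loss d n V W) \<Longrightarrow> c \<le> opt_eval_loss d n"
  unfolding opt_eval_loss_def by (rule cINF_greatest) auto

lemma eval_loss_ge_sq_div:
  assumes "1 \<le> d" "d \<le> n"
  shows "1 / 6 * real d ^ 2 / real n \<le> eval_loss d n V W"
proof -
  have "1 / 6 * real d ^ 2 / real n = real d * real d / (2 * (3 * real n))"
    by (simp add: power2_eq_square)
  also have "\<dots> \<le> real d * (real d + 1) / (2 * (real n + real d + 1))"
    using assms by (intro frac_le) auto
  also have "\<dots> \<le> eval_loss d n V W"
    using assms by (intro eval_loss_ge) auto
  finally show ?thesis .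
qed

lemma eval_loss_ge_if_n_le:
  assumes d: "1 \<le> d" and n: "1 \<le> n" and C: "0 < C" and L: "1 \<le> L"
    and n_le: "real n \<le> C * real d * L"
  shows "1 / (2 * (C + 2)) * real d / L \<le> eval_loss d n V W"
proof -
  have "1 / (2 * (C + 2)) * real d / L = real d * real d / (2 * ((C + 2) * real d * L))"
    using d by simp
  also have "\<dots> \<le> real d * (real d + 1) / (2 * (real n + real d + 1))"
  proof (rule frac_le)
    have "real d \<le> real d * L" using mult_left_mono[OF L, of "real d"] by simp
    moreover have "1 \<le> real d" using d by simp
    ultimately have "2 * (real n + real d + 1) \<le> 2 * (C * real d * L) + 4 * (real d * L)"
      unfolding distrib_left using n_le by linarith
    also have "\<dots> = 2 * ((C + 2) * real d * L)"
      by (simp add: algebra_simps)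
    finally show "2 * (real n + real d + 1) \<le> 2 * ((C + 2) * real d * L)" .
  qed (auto intro: mult_left_mono)
  also have "\<dots> \<le> eval_loss d n V W"
    using n by (rule eval_loss_ge)
  finally show ?thesis .
qed

lemma eval_loss_polylog_regime:
  fixes N :: "nat \<Rightarrow> nat" and C :: real and k :: nat
  assumes C: "0 < C" and N: "\<And>d. 1 \<le> N d"
    and N_le: "\<forall>\<^sub>F d in at_top. real (N d) \<le> C * real d * ln (real d) ^ k"
  shows "(\<exists>c' C' k'. c' > 0 \<and> C' > 0 \<and>
            (\<forall>\<^sub>F d in at_top. (\<forall>V W. eval_loss d (N d) V W \<ge> c' * real d / ln (real d) ^ k')
                            \<and> opt_eval_loss d (N d) \<le> C' * real d * ln (real d) ^ k'))
         \<and> filterlim (\<lambda>d. opt_eval_loss d (N d)) at_top at_top"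
proof -
  define c where "c = 1 / (2 * (C + 2))"
  have c_pos: "0 < c" using C by (simp add: c_def)
  have "filterlim (\<lambda>d::nat. ln (real d)) at_top at_top" by real_asymp
  then have ln_power_ge: "\<forall>\<^sub>F d in at_top. 1 \<le> ln (real d) ^ k"
    by (rule filterlim_at_top[THEN iffD1, rule_format, THEN eventually_mono]) (rule one_le_power)
  have lower: "\<forall>\<^sub>F d in at_top. \<forall>V W. c * real d / ln (real d) ^ k \<le> eval_loss d (N d) V W"
    using N_le ln_power_ge eventually_ge_at_top[of 1] unfolding c_def
    by eventually_elim (intro allI eval_loss_ge_if_n_le[OF _ N C]; simp)
  have upper: "\<forall>\<^sub>F d in at_top. opt_eval_loss d (N d) \<le> 1 * real d * ln (real d) ^ k"
    using ln_power_ge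
  proof eventually_elim
    case (elim d)
    have "opt_eval_loss d (N d) \<le> real d / 2"
      using opt_eval_loss_le[of d "N d" "\<lambda>_ _. 0" "\<lambda>_ _. 0"] by (simp add: eval_loss_zero_params)
    also have "\<dots> \<le> real d * ln (real d) ^ k"
      using mult_left_mono[OF elim, of "real d"] by simp
    finally show ?case by simp
  qed
  have "filterlim (\<lambda>d::nat. c * real d / ln (real d) ^ k) at_top at_top"
    using c_pos by real_asymp
  then have "filterlim (\<lambda>d. opt_eval_loss d (N d)) at_top at_top"
    by (rule filterlim_at_top_mono) (use lower in \<open>eventually_elim, auto intro: opt_eval_loss_greatest\<close>)
  moreover have "\<forall>\<^sub>F d in at_top. (\<forall>V W. c * real d / ln (real d) ^ k \<le> eval_loss d (N d) V W)
                                 \<and> opt_eval_loss d (N d) \<le> 1 * real d * ln (real d) ^ k"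
    using lower upper by (rule eventually_conj)
  ultimately show ?thesis
    using c_pos zero_less_one by blast
qed

theorem corollary3p2:
  shows "\<exists>c>0. (\<forall>d n V W. 1 \<le> d \<and> d \<le> n \<longrightarrow>
                    eval_loss d n V W \<ge> c * real d ^ 2 / real n)
        \<and> (\<forall>(N :: nat \<Rightarrow> nat) (C1::real) (C2::real) (k::nat).
              C1 > 0 \<and> C2 > 0 \<and> (\<forall>d. N d \<ge> 1) \<and>
              (\<forall>\<^sub>F d in at_top. C1 * real d / ln (real d) ^ k \<le> real (N d)
                                 \<and> real (N d) \<le> C2 * real d * ln (real d) ^ k)
              \<longrightarrow> (\<exists>c' C' k'. c' > 0 \<and> C' > 0 \<and>
                     (\<forall>\<^sub>F d in at_top. (\<forall>V W. eval_loss d (N d) V W \<ge> c' * real d / ln (real d) ^ k')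
                                     \<and> opt_eval_loss d (N d) \<le> C' * real d * ln (real d) ^ k'))
                  \<and> filterlim (\<lambda>d. opt_eval_loss d (N d)) at_top at_top)"
proof (intro exI[of _ "1 / 6"] conjI[OF _ conjI] allI impI)
  show "(0 :: real) < 1 / 6" by simp
next
  fix d n :: nat and V W :: "nat \<Rightarrow> nat \<Rightarrow> real"
  assume "1 \<le> d \<and> d \<le> n"
  then show "1 / 6 * real d ^ 2 / real n \<le> eval_loss d n V W"
    by (intro eval_loss_ge_sq_div) auto
  \<comment> \<open>only the upper bound on N d is needed, as the loss bound decreases in n\<close>
qed (elim conjE, rule eval_loss_polylog_regime[rotated 2], erule eventually_mono, blast, simp_all)

end
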